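(* Let $R=K[X_1,\dots,X_d]$ be a polynomial ring over a field $K$, $f$ a nonzero polynomial in $R$, and $\mathcal{J}_f=\bigcap_{n\ge1}\sqrt{J_{f^n}}$. Then $I:_R(f)^\infty=I:_R\mathcal{J}_f^\infty$ for all monomial ideals $I$ of $R$.
   Context: For a nonzero polynomial $g=\sum_{\mathbf{n}}a_{\mathbf{n}}X_1^{n_1}\cdots X_d^{n_d}$, $J_g$ is the monomial ideal generated by the monomials occurring in $g$ with nonzero coefficient. $I:_RJ^\infty=\bigcup_k(I:_RJ^k)$. *)

theory Defs
  imports "HOL-Library.Poly_Mapping"
begin

text \<open>Polynomial ring K[X_v : v in 'v] represented as ('v =>0 nat) =>0 K
  (monomial exponent vectors to coefficients); 'v finite, d = CARD('v).\<close>

type_synonym ('v, 'k) mpoly = "('v \<Rightarrow>\<^sub>0 nat) \<Rightarrow>\<^sub>0 'k"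

definition is_ideal :: "'a::comm_ring_1 set \<Rightarrow> bool" where
  "is_ideal I \<longleftrightarrow> 0 \<in> I \<and> (\<forall>a\<in>I. \<forall>b\<in>I. a + b \<in> I) \<and> (\<forall>r a. a \<in> I \<longrightarrow> r * a \<in> I)"

definition gen_ideal :: "'a::comm_ring_1 set \<Rightarrow> 'a set" where
  "gen_ideal S = \<Inter>{I. is_ideal I \<and> S \<subseteq> I}"

definition ideal_prod :: "'a::comm_ring_1 set \<Rightarrow> 'a set \<Rightarrow> 'a set" where
  "ideal_prod I J = gen_ideal {a * b | a b. a \<in> I \<and> b \<in> J}"

fun ideal_pow :: "'a::comm_ring_1 set \<Rightarrow> nat \<Rightarrow> 'a set" where
  "ideal_pow I 0 = UNIV"
| "ideal_pow I (Suc n) = ideal_prod I (ideal_pow I n)"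

definition colon :: "'a::comm_ring_1 set \<Rightarrow> 'a set \<Rightarrow> 'a set" where
  "colon I J = {r. \<forall>j\<in>J. r * j \<in> I}"

definition saturation :: "'a::comm_ring_1 set \<Rightarrow> 'a set \<Rightarrow> 'a set" where
  "saturation I J = (\<Union>k. colon I (ideal_pow J k))"

definition radical :: "'a::comm_ring_1 set \<Rightarrow> 'a set" where
  "radical J = {r. \<exists>n>0. r ^ n \<in> J}"

definition mono_of :: "('v \<Rightarrow>\<^sub>0 nat) \<Rightarrow> ('v, 'k::comm_ring_1) mpoly" where
  "mono_of \<alpha> = Poly_Mapping.single \<alpha> 1"

definition monomial_ideal :: "('v, 'k::comm_ring_1) mpoly set \<Rightarrow> bool" where
  "monomial_ideal I \<longleftrightarrow> is_ideal I \<and> I = gen_ideal (I \<inter> range mono_of)"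

definition Jmon :: "('v, 'k::comm_ring_1) mpoly \<Rightarrow> ('v, 'k) mpoly set" where
  "Jmon g = gen_ideal (mono_of ` Poly_Mapping.keys g)"

definition Jscript :: "('v, 'k::comm_ring_1) mpoly \<Rightarrow> ('v, 'k) mpoly set" where
  "Jscript f = (\<Inter>n\<in>{1..}. radical (Jmon (f ^ n)))"

end

theory Submission
  imports Defs
begin

text \<open>
  Write \<open>X\<^bsub>S\<^esub>\<close> for the product of the variables in \<open>S\<close>. Let \<open>g f\<^sup>k \<in> I\<close> and let \<open>a\<close> be an exponent
  of \<open>f\<close>. Membership in the monomial ideal \<open>I : X\<^bsub>supp a\<^esub>\<^sup>\<infinity>\<close> ignores the exponents of the
  variables in \<open>supp a\<close>, and \<open>f\<close> is a nonzerodivisor modulo it: if \<open>h f\<close> lies in the ideal but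
  \<open>h\<close> does not, take the least monomial of \<open>h\<close> outside the ideal (by degree in the variables
  outside \<open>supp a\<close>, then by an additive total order) and the least monomial of \<open>f\<close> involving
  only variables of \<open>supp a\<close>; their product is a monomial of \<open>h f\<close> that cannot cancel and lies
  outside the ideal. Hence \<open>g\<close> lies in this ideal, and \<open>X\<^sup>\<mu> X\<^bsub>supp a\<^esub>\<^sup>C \<in> I\<close> for every monomial
  \<open>X\<^sup>\<mu>\<close> of \<open>g\<close>, every \<open>a\<close> and one uniform \<open>C\<close>.

  Conversely \<open>\<J>\<^sub>f \<subseteq> \<surd>J\<^sub>f\<close>, and every monomial of an element of \<open>\<surd>J\<^sub>f\<close> is divisible by
  \<open>X\<^bsub>supp a\<^esub>\<close> for some exponent \<open>a\<close> of \<open>f\<close>, because restricting to the monomials supported in a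
  fixed set of variables is a ring homomorphism of the polynomial ring, which is a domain.
  By pigeonhole every monomial of an element of \<open>\<J>\<^sub>f\<^bsup>|supp f|\<cdot>C\<^esup>\<close> is divisible by some
  \<open>X\<^bsub>supp a\<^esub>\<^sup>C\<close>, so \<open>g \<J>\<^sub>f\<^bsup>|supp f|\<cdot>C\<^esup> \<subseteq> I\<close>. The other inclusion follows from \<open>(f) \<subseteq> \<J>\<^sub>f\<close>.
\<close>

lemma is_ideal_gen_ideal: "is_ideal (gen_ideal S)"
  unfolding gen_ideal_def is_ideal_def by auto

lemma gen_ideal_subset: "S \<subseteq> gen_ideal S"
  unfolding gen_ideal_def by auto

lemma gen_ideal_least: "is_ideal I \<Longrightarrow> S \<subseteq> I \<Longrightarrow> gen_ideal S \<subseteq> I"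
  unfolding gen_ideal_def by auto

lemma gen_ideal_mono: "S \<subseteq> T \<Longrightarrow> gen_ideal S \<subseteq> gen_ideal T"
  unfolding gen_ideal_def by auto

lemma ideal_mult_closed: "is_ideal I \<Longrightarrow> a \<in> I \<Longrightarrow> r * a \<in> I"
  unfolding is_ideal_def by auto

lemma ideal_sum_closed: "is_ideal I \<Longrightarrow> (\<And>x. x \<in> A \<Longrightarrow> g x \<in> I) \<Longrightarrow> sum g A \<in> I"
  by (induction A rule: infinite_finite_induct) (simp_all add: is_ideal_def)

lemma gen_ideal_singleton: "gen_ideal {f} = range (\<lambda>r. r * f)"
proof
  have "is_ideal (range (\<lambda>r. r * f))"
    unfolding is_ideal_def
  proof (intro conjI ballI allI impI)
    show "0 \<in> range (\<lambda>r. r * f)"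
      by (rule range_eqI[of _ _ 0]) simp
  next
    fix a b assume "a \<in> range (\<lambda>r. r * f)" "b \<in> range (\<lambda>r. r * f)"
    then obtain r s where "a = r * f" "b = s * f"
      by blast
    then show "a + b \<in> range (\<lambda>r. r * f)"
      by (intro range_eqI[of _ _ "r + s"]) (simp add: distrib_right)
  next
    fix t a assume "a \<in> range (\<lambda>r. r * f)"
    then obtain r where "a = r * f"
      by blast
    then show "t * a \<in> range (\<lambda>r. r * f)"
      by (intro range_eqI[of _ _ "t * r"]) (simp add: mult.assoc)
  qed
  moreover have "f \<in> range (\<lambda>r. r * f)"
    by (rule range_eqI[of _ _ 1]) simp
  ultimately show "gen_ideal {f} \<subseteq> range (\<lambda>r. r * f)"
    by (intro gen_ideal_least) auto
  show "range (\<lambda>r. r * f) \<subseteq> gen_ideal {f}"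
    using ideal_mult_closed[OF is_ideal_gen_ideal] gen_ideal_subset by blast
qed

lemma ideal_pow_mono: "J \<subseteq> J' \<Longrightarrow> ideal_pow J k \<subseteq> ideal_pow J' k"
proof (induction k)
  case (Suc k)
  then show ?case
    unfolding ideal_pow.simps ideal_prod_def by (intro gen_ideal_mono) blast
qed simp

lemma power_mem_ideal_pow: "f \<in> J \<Longrightarrow> f ^ k \<in> ideal_pow J k"
proof (induction k)
  case (Suc k)
  then show ?case
    unfolding ideal_pow.simps ideal_prod_def by (intro gen_ideal_subset[THEN subsetD]) auto
qed simp

lemma saturation_antimono:
  assumes "J \<subseteq> J'"
  shows "saturation I J' \<subseteq> saturation I J"
  unfolding saturation_def colon_def using ideal_pow_mono[OF assms] by (intro UN_mono) auto


lemma keys_mono_of [simp]: "Poly_Mapping.keys (mono_of \<nu> :: ('v, 'k::comm_ring_1) mpoly) = {\<nu>}"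
  by (simp add: mono_of_def)

lemma mono_of_add: "mono_of (\<mu> + \<nu>) = (mono_of \<mu> * mono_of \<nu> :: ('v, 'k::comm_ring_1) mpoly)"
  by (simp add: mono_of_def mult_single)

lemma mpoly_eq_sum_monomials:
  fixes p :: "('v, 'k::comm_ring_1) mpoly"
  shows "p = (\<Sum>\<nu>\<in>Poly_Mapping.keys p. Poly_Mapping.single 0 (Poly_Mapping.lookup p \<nu>) * mono_of \<nu>)"
    (is "p = ?sum")
proof (rule poly_mapping_eqI)
  fix x
  have "Poly_Mapping.lookup p x = (\<Sum>\<nu>\<in>Poly_Mapping.keys p. Poly_Mapping.lookup p \<nu> when \<nu> = x)"
    by (cases "x \<in> Poly_Mapping.keys p") (simp_all add: when_def in_keys_iff)
  then show "Poly_Mapping.lookup p x = Poly_Mapping.lookup ?sum x"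
    by (simp add: mono_of_def mult_single lookup_sum lookup_single)
qed

lemma keys_add_nat: "Poly_Mapping.keys (x + y :: 'a \<Rightarrow>\<^sub>0 nat) = Poly_Mapping.keys x \<union> Poly_Mapping.keys y"
  by (auto simp: in_keys_iff lookup_add)

definition upward_closed :: "'a::plus set \<Rightarrow> bool" where
  "upward_closed E \<longleftrightarrow> (\<forall>\<nu>\<in>E. \<forall>\<mu>. \<mu> + \<nu> \<in> E)"

definition mono_span :: "('v \<Rightarrow>\<^sub>0 nat) set \<Rightarrow> ('v, 'k::zero) mpoly set" where
  "mono_span E = {h. Poly_Mapping.keys h \<subseteq> E}"

lemma mono_span_mono: "E \<subseteq> F \<Longrightarrow> mono_span E \<subseteq> mono_span F"
  unfolding mono_span_def by blast

lemma is_ideal_mono_span: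
  assumes "upward_closed E"
  shows "is_ideal (mono_span E :: ('v, 'k::comm_ring_1) mpoly set)"
  unfolding is_ideal_def mono_span_def
proof (intro conjI ballI allI impI)
  fix a b :: "('v, 'k) mpoly"
  assume "a \<in> {h. Poly_Mapping.keys h \<subseteq> E}" "b \<in> {h. Poly_Mapping.keys h \<subseteq> E}"
  then show "a + b \<in> {h. Poly_Mapping.keys h \<subseteq> E}"
    using keys_add[of a b] by auto
next
  fix r a :: "('v, 'k) mpoly"
  assume "a \<in> {h. Poly_Mapping.keys h \<subseteq> E}"
  then show "r * a \<in> {h. Poly_Mapping.keys h \<subseteq> E}"
    using keys_mult[of r a] assms unfolding upward_closed_def by blast
qed simp

lemma monomial_ideal_imp_is_ideal: "monomial_ideal I \<Longrightarrow> is_ideal I"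
  unfolding monomial_ideal_def by blast

lemma monomial_ideal_eq_mono_span:
  fixes I :: "('v, 'k::comm_ring_1) mpoly set"
  assumes "monomial_ideal I"
  shows "I = mono_span {\<nu>. mono_of \<nu> \<in> I}"
proof
  have I: "is_ideal I" "I = gen_ideal (I \<inter> range mono_of)"
    using assms unfolding monomial_ideal_def by blast+
  have "upward_closed {\<nu>. mono_of \<nu> \<in> I}"
    unfolding upward_closed_def using I(1) by (simp add: mono_of_add ideal_mult_closed)
  then have "gen_ideal (I \<inter> range mono_of) \<subseteq> mono_span {\<nu>. mono_of \<nu> \<in> I}"
    by (intro gen_ideal_least is_ideal_mono_span) (auto simp: mono_span_def)
  with I(2) show "I \<subseteq> mono_span {\<nu>. mono_of \<nu> \<in> I}" by simp
  show "mono_span {\<nu>. mono_of \<nu> \<in> I} \<subseteq> I"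
  proof
    fix h :: "('v, 'k) mpoly"
    assume "h \<in> mono_span {\<nu>. mono_of \<nu> \<in> I}"
    then have "(\<Sum>\<nu>\<in>Poly_Mapping.keys h. Poly_Mapping.single 0 (Poly_Mapping.lookup h \<nu>) * mono_of \<nu>) \<in> I"
      using I(1) by (intro ideal_sum_closed ideal_mult_closed) (auto simp: mono_span_def)
    then show "h \<in> I" by (simp flip: mpoly_eq_sum_monomials)
  qed
qed

lemma mono_of_mem_ideal_mono:
  fixes I :: "('v, 'k::comm_ring_1) mpoly set"
  assumes "is_ideal I" "mono_of \<nu> \<in> I" "\<And>i. Poly_Mapping.lookup \<nu> i \<le> Poly_Mapping.lookup \<mu> i"
  shows "mono_of \<mu> \<in> I"
proof -
  have "\<mu> = (\<mu> - \<nu>) + \<nu>"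
    by (rule poly_mapping_eqI) (use assms(3) in \<open>simp add: lookup_add lookup_minus\<close>)
  then have "mono_of \<mu> = mono_of (\<mu> - \<nu>) * (mono_of \<nu> :: ('v, 'k) mpoly)"
    by (metis mono_of_add)
  with assms(1,2) show ?thesis by (simp add: ideal_mult_closed)
qed

lemma mult_mem_monomial_ideal:
  fixes p q :: "('v, 'k::comm_ring_1) mpoly"
  assumes "monomial_ideal I"
    and "\<And>\<mu> \<nu>. \<mu> \<in> Poly_Mapping.keys p \<Longrightarrow> \<nu> \<in> Poly_Mapping.keys q \<Longrightarrow> mono_of (\<mu> + \<nu>) \<in> I"
  shows "p * q \<in> I"
  using monomial_ideal_eq_mono_span[OF assms(1)] keys_mult[of p q] assms(2)
  unfolding mono_span_def by blast


lemma lookup_mult_eq_zero: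
  assumes "\<And>x y. x \<in> Poly_Mapping.keys p \<Longrightarrow> y \<in> Poly_Mapping.keys q \<Longrightarrow> x + y \<noteq> k"
  shows "Poly_Mapping.lookup (p * q) k = 0"
proof (rule ccontr)
  assume "Poly_Mapping.lookup (p * q) k \<noteq> 0"
  then have "k \<in> Poly_Mapping.keys (p * q)"
    by (simp add: in_keys_iff)
  with keys_mult[of p q] assms show False
    by blast
qed

lemma lookup_mult_unique_decomposition:
  fixes p q :: "'a::comm_monoid_add \<Rightarrow>\<^sub>0 'b::comm_ring_1"
  assumes unique: "\<And>x' y'. x' \<in> Poly_Mapping.keys p \<Longrightarrow> y' \<in> Poly_Mapping.keys q \<Longrightarrow> x' + y' = x + y
      \<Longrightarrow> x' = x \<and> y' = y"
  shows "Poly_Mapping.lookup (p * q) (x + y) = Poly_Mapping.lookup p x * Poly_Mapping.lookup q y"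
proof -
  define p' where "p' = p - Poly_Mapping.single x (Poly_Mapping.lookup p x)"
  define q' where "q' = q - Poly_Mapping.single y (Poly_Mapping.lookup q y)"
  have keys_p': "Poly_Mapping.keys p' = Poly_Mapping.keys p - {x}"
    and keys_q': "Poly_Mapping.keys q' = Poly_Mapping.keys q - {y}"
    by (auto simp: p'_def q'_def in_keys_iff lookup_minus lookup_single when_def split: if_splits)
  have "p * q = Poly_Mapping.single (x + y) (Poly_Mapping.lookup p x * Poly_Mapping.lookup q y)
      + Poly_Mapping.single x (Poly_Mapping.lookup p x) * q' + p' * q"
    by (simp add: p'_def q'_def algebra_simps mult_single)
  moreover have "Poly_Mapping.lookup (Poly_Mapping.single x (Poly_Mapping.lookup p x) * q') (x + y) = 0"
    by (rule lookup_mult_eq_zero) (use unique in \<open>fastforce simp: keys_q' in_keys_iff split: if_splits\<close>)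
  moreover have "Poly_Mapping.lookup (p' * q) (x + y) = 0"
    by (rule lookup_mult_eq_zero) (auto simp: keys_p' dest: unique)
  ultimately show ?thesis
    by (simp add: lookup_add)
qed

lemma additive_embedding_sum_minima_unique:
  fixes e :: "'a::plus \<Rightarrow> 'b::linordered_cancel_ab_semigroup_add"
  assumes e: "inj e" "\<And>x y. e (x + y) = e x + e y"
    and "e x \<le> e x'" "e y \<le> e y'" "x' + y' = x + y"
  shows "x' = x \<and> y' = y"
proof -
  have sum: "e x' + e y' = e x + e y"
    using assms(5) by (metis e(2))
  have "e x' = e x"
  proof (rule ccontr)
    assume "e x' \<noteq> e x"
    with assms(3) have "e x < e x'"
      by simp
    then have "e x + e y < e x' + e y'"
      using assms(4) by (rule add_less_le_mono)
    with sum show False by simp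
  qed
  with sum have "e y' = e y" by simp
  with \<open>e x' = e x\<close> show ?thesis
    using e(1) by (simp add: inj_eq)
qed

text \<open>
  The library's domain instance for \<open>'a \<Rightarrow>\<^sub>0 'b\<close> needs linearly ordered keys; for exponent
  vectors over an unordered finite type of variables we pull back the order of \<open>nat \<Rightarrow>\<^sub>0 nat\<close>
  along an additive embedding.
\<close>

lemma exponents_additive_embedding:
  obtains e :: "('v::finite \<Rightarrow>\<^sub>0 nat) \<Rightarrow> (nat \<Rightarrow>\<^sub>0 nat)"
  where "inj e" "\<And>x y. e (x + y) = e x + e y"
proof -
  obtain g :: "'v \<Rightarrow> nat" where g: "inj g"
    using finite_imp_inj_to_nat_seg[of "UNIV :: 'v set"] by auto
  define e where "e x = (\<Sum>i\<in>UNIV. Poly_Mapping.single (g i) (Poly_Mapping.lookup x i))" for x :: "'v \<Rightarrow>\<^sub>0 nat"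
  have lookup_e: "Poly_Mapping.lookup (e x) (g j) = Poly_Mapping.lookup x j" for x j
  proof -
    have "Poly_Mapping.lookup (e x) (g j) = (\<Sum>i\<in>UNIV. Poly_Mapping.lookup x i when i = j)"
      using g by (simp add: e_def lookup_sum lookup_single inj_eq)
    also have "\<dots> = Poly_Mapping.lookup x j"
      by (simp add: when_def)
    finally show ?thesis .
  qed
  show ?thesis
  proof
    show "inj e"
      by (rule injI) (metis lookup_e poly_mapping_eqI)
    show "e (x + y) = e x + e y" for x y
      by (simp add: e_def lookup_add single_add sum.distrib)
  qed
qed

lemma obtain_min_on_finite:
  fixes f :: "'a \<Rightarrow> 'b::linorder"
  assumes "finite A" "A \<noteq> {}"
  obtains x where "x \<in> A" "\<And>y. y \<in> A \<Longrightarrow> f x \<le> f y"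
  using arg_min_if_finite[OF assms, of f] arg_min_least[OF assms, of _ f] by blast

lemma obtain_lex_min_on_finite:
  fixes f :: "'a \<Rightarrow> 'b::linorder" and g :: "'a \<Rightarrow> 'c::linorder"
  assumes "finite A" "A \<noteq> {}"
  obtains x where "x \<in> A" "\<And>y. y \<in> A \<Longrightarrow> f x \<le> f y" "\<And>y. y \<in> A \<Longrightarrow> f y = f x \<Longrightarrow> g x \<le> g y"
proof -
  obtain x0 where x0: "x0 \<in> A" "\<And>y. y \<in> A \<Longrightarrow> f x0 \<le> f y"
    using obtain_min_on_finite[OF assms, of f] by blast
  have "finite {y \<in> A. f y = f x0}" "{y \<in> A. f y = f x0} \<noteq> {}"
    using assms(1) x0(1) by auto
  then obtain x where "x \<in> {y \<in> A. f y = f x0}" "\<And>y. y \<in> {y \<in> A. f y = f x0} \<Longrightarrow> g x \<le> g y"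
    using obtain_min_on_finite[of _ g] by blast
  with x0 show ?thesis
    using that by auto
qed

lemma mpoly_mult_not_zero:
  fixes p q :: "('v::finite, 'k::idom) mpoly"
  assumes "p \<noteq> 0" "q \<noteq> 0"
  shows "p * q \<noteq> 0"
proof -
  obtain e :: "('v \<Rightarrow>\<^sub>0 nat) \<Rightarrow> (nat \<Rightarrow>\<^sub>0 nat)" where e: "inj e" "\<And>x y. e (x + y) = e x + e y"
    using exponents_additive_embedding by blast
  obtain x where x: "x \<in> Poly_Mapping.keys p" "\<And>x'. x' \<in> Poly_Mapping.keys p \<Longrightarrow> e x \<le> e x'"
    using obtain_min_on_finite[of "Poly_Mapping.keys p" e] assms(1) by auto
  obtain y where y: "y \<in> Poly_Mapping.keys q" "\<And>y'. y' \<in> Poly_Mapping.keys q \<Longrightarrow> e y \<le> e y'"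
    using obtain_min_on_finite[of "Poly_Mapping.keys q" e] assms(2) by auto
  have "Poly_Mapping.lookup (p * q) (x + y) = Poly_Mapping.lookup p x * Poly_Mapping.lookup q y"
    by (rule lookup_mult_unique_decomposition) (use additive_embedding_sum_minima_unique[OF e] x y in blast)
  also have "\<dots> \<noteq> 0"
    using x(1) y(1) by (simp add: in_keys_iff)
  finally show ?thesis by auto
qed

lemma mpoly_power_not_zero:
  fixes p :: "('v::finite, 'k::idom) mpoly"
  shows "p \<noteq> 0 \<Longrightarrow> p ^ n \<noteq> 0"
  by (induction n) (auto simp: mpoly_mult_not_zero)


lift_definition restrict_keys :: "'a set \<Rightarrow> ('a \<Rightarrow>\<^sub>0 'b::zero) \<Rightarrow> 'a \<Rightarrow>\<^sub>0 'b"
  is "\<lambda>A p x. if x \<in> A then p x else 0"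
  by (erule finite_subset[rotated]) auto

lemma lookup_restrict_keys:
  "Poly_Mapping.lookup (restrict_keys A p) x = (if x \<in> A then Poly_Mapping.lookup p x else 0)"
  by transfer simp

lemma keys_restrict_keys: "Poly_Mapping.keys (restrict_keys A p) = Poly_Mapping.keys p \<inter> A"
  by (auto simp: in_keys_iff lookup_restrict_keys split: if_splits)

lemma restrict_keys_mult:
  fixes p q :: "'a::comm_monoid_add \<Rightarrow>\<^sub>0 'b::comm_semiring_1"
  assumes A: "\<And>x y. x + y \<in> A \<longleftrightarrow> x \<in> A \<and> y \<in> A"
  shows "restrict_keys A (p * q) = restrict_keys A p * restrict_keys A q"
proof (rule poly_mapping_eqI)
  fix k
  have Sum_any_zero: "Sum_any g = 0" if "\<And>r. g r = 0" for g :: "'a \<Rightarrow> 'b"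
    using that by (simp add: fun_eq_iff[symmetric, of g "\<lambda>_. 0", simplified])
  have inside: "Poly_Mapping.lookup p l * (\<Sum>r. Poly_Mapping.lookup q r when k = l + r)
      = Poly_Mapping.lookup (restrict_keys A p) l
        * (\<Sum>r. Poly_Mapping.lookup (restrict_keys A q) r when k = l + r)"
    if "k \<in> A" for l
  proof (cases "l \<in> A")
    case True
    have "(\<Sum>r. Poly_Mapping.lookup q r when k = l + r)
        = (\<Sum>r. Poly_Mapping.lookup (restrict_keys A q) r when k = l + r)"
      by (rule Sum_any.cong) (use that in \<open>auto simp: when_def A lookup_restrict_keys\<close>)
    with True show ?thesis
      by (simp add: lookup_restrict_keys)
  next
    case False
    have "(\<Sum>r. Poly_Mapping.lookup q r when k = l + r) = 0"
      by (rule Sum_any_zero) (use that False in \<open>auto simp: when_def A\<close>)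
    with False show ?thesis
      by (simp add: lookup_restrict_keys)
  qed
  have outside: "Poly_Mapping.lookup (restrict_keys A p) l
      * (\<Sum>r. Poly_Mapping.lookup (restrict_keys A q) r when k = l + r) = 0"
    if "k \<notin> A" for l
  proof -
    have "(\<Sum>r. Poly_Mapping.lookup (restrict_keys A q) r when k = l + r) = 0" if "l \<in> A"
      by (rule Sum_any_zero) (use \<open>k \<notin> A\<close> that in \<open>auto simp: when_def A lookup_restrict_keys\<close>)
    then show ?thesis
      by (cases "l \<in> A") (simp_all add: lookup_restrict_keys)
  qed
  show "Poly_Mapping.lookup (restrict_keys A (p * q)) k
      = Poly_Mapping.lookup (restrict_keys A p * restrict_keys A q) k"
    unfolding lookup_mult lookup_restrict_keys[of A "p * q"]
    by (auto intro!: Sum_any.cong Sum_any_zero simp: inside outside)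
qed

lemma restrict_keys_power:
  fixes p :: "'a::comm_monoid_add \<Rightarrow>\<^sub>0 'b::comm_semiring_1"
  assumes "\<And>x y. x + y \<in> A \<longleftrightarrow> x \<in> A \<and> y \<in> A" "0 \<in> A"
  shows "restrict_keys A (p ^ n) = restrict_keys A p ^ n"
proof (induction n)
  case 0
  show ?case
    by (rule poly_mapping_eqI) (simp add: lookup_restrict_keys lookup_one when_def assms(2))
next
  case (Suc n)
  then show ?case
    by (simp add: restrict_keys_mult[OF assms(1)])
qed

definition outer_degree :: "'v set \<Rightarrow> ('v::finite \<Rightarrow>\<^sub>0 nat) \<Rightarrow> nat" where
  "outer_degree S \<nu> = (\<Sum>i\<in>-S. Poly_Mapping.lookup \<nu> i)"

lemma outer_degree_add: "outer_degree S (x + y) = outer_degree S x + outer_degree S y"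
  by (simp add: outer_degree_def lookup_add sum.distrib)

lemma outer_degree_eq_0_iff:
  "outer_degree S \<nu> = 0 \<longleftrightarrow> (\<forall>i. i \<notin> S \<longrightarrow> Poly_Mapping.lookup \<nu> i = 0)"
  by (auto simp: outer_degree_def)

lemma outer_degree_sum_of_minimal:
  assumes "outer_degree S x \<le> outer_degree S x'" "outer_degree S y = 0" "x' + y' = x + y"
  shows "outer_degree S x' = outer_degree S x \<and> outer_degree S y' = 0"
  using assms outer_degree_add[of S x' y'] outer_degree_add[of S x y] by simp

lemma mono_span_mult_cancel:
  fixes h f :: "('v::finite, 'k::idom) mpoly"
  assumes up: "upward_closed E"
    and coord: "\<And>\<nu> \<nu>'. \<nu> \<in> E
      \<Longrightarrow> \<forall>i. i \<notin> S \<longrightarrow> Poly_Mapping.lookup \<nu> i = Poly_Mapping.lookup \<nu>' i \<Longrightarrow> \<nu>' \<in> E"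
    and a: "a \<in> Poly_Mapping.keys f" "Poly_Mapping.keys a \<subseteq> S"
    and hf: "h * f \<in> mono_span E"
  shows "h \<in> mono_span E"
proof (rule ccontr)
  let ?deg = "outer_degree S"
  define N where "N = Poly_Mapping.keys h - E"
  define F0 where "F0 = {y \<in> Poly_Mapping.keys f. ?deg y = 0}"
  obtain e :: "('v \<Rightarrow>\<^sub>0 nat) \<Rightarrow> (nat \<Rightarrow>\<^sub>0 nat)" where e: "inj e" "\<And>x y. e (x + y) = e x + e y"
    using exponents_additive_embedding by blast
  assume "h \<notin> mono_span E"
  then have "finite N" "N \<noteq> {}"
    by (auto simp: N_def mono_span_def)
  then obtain x where x: "x \<in> N" "\<And>x'. x' \<in> N \<Longrightarrow> ?deg x \<le> ?deg x'"
    "\<And>x'. x' \<in> N \<Longrightarrow> ?deg x' = ?deg x \<Longrightarrow> e x \<le> e x'"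
    using obtain_lex_min_on_finite[of N ?deg e] by blast
  have "a \<in> F0"
    using a by (auto simp: F0_def outer_degree_eq_0_iff in_keys_iff)
  then have "finite F0" "F0 \<noteq> {}"
    by (auto simp: F0_def)
  then obtain y where y: "y \<in> F0" "\<And>y'. y' \<in> F0 \<Longrightarrow> e y \<le> e y'"
    using obtain_min_on_finite[of _ e] by blast
  have "x + y \<notin> E"
  proof
    assume "x + y \<in> E"
    then have "x \<in> E"
      by (rule coord) (use y(1) in \<open>simp add: F0_def outer_degree_eq_0_iff lookup_add\<close>)
    with x(1) show False
      by (simp add: N_def)
  qed
  have "Poly_Mapping.lookup (h * f) (x + y) = Poly_Mapping.lookup h x * Poly_Mapping.lookup f y"
  proof (rule lookup_mult_unique_decomposition)
    fix x' y' assume x': "x' \<in> Poly_Mapping.keys h" and y': "y' \<in> Poly_Mapping.keys f"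
      and sum: "x' + y' = x + y"
    have "x' \<in> N"
      using up \<open>x + y \<notin> E\<close> sum x' unfolding upward_closed_def N_def by (metis DiffI add.commute)
    moreover have "?deg y = 0"
      using y(1) by (simp add: F0_def)
    ultimately have "?deg x' = ?deg x" "y' \<in> F0"
      using outer_degree_sum_of_minimal[OF x(2) _ sum] y' by (auto simp: F0_def)
    then show "x' = x \<and> y' = y"
      using additive_embedding_sum_minima_unique[OF e x(3) y(2) sum] \<open>x' \<in> N\<close> by blast
  qed
  also have "\<dots> \<noteq> 0"
    using x(1) y(1) by (simp add: N_def F0_def in_keys_iff)
  finally have "x + y \<in> E"
    using hf by (auto simp: mono_span_def in_keys_iff)
  with \<open>x + y \<notin> E\<close> show False ..
qed

text \<open>The exponents of the monomials of \<open>I : X\<^sub>S\<^sup>\<infinity>\<close>.\<close>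

definition sat_exponents :: "('v, 'k::comm_ring_1) mpoly set \<Rightarrow> 'v set \<Rightarrow> ('v \<Rightarrow>\<^sub>0 nat) set" where
  "sat_exponents I S = {\<mu>. \<exists>\<delta>. Poly_Mapping.keys \<delta> \<subseteq> S \<and> mono_of (\<mu> + \<delta>) \<in> I}"

lemma upward_closed_sat_exponents:
  fixes I :: "('v, 'k::comm_ring_1) mpoly set"
  assumes "is_ideal I"
  shows "upward_closed (sat_exponents I S)"
  unfolding upward_closed_def sat_exponents_def
  by (auto simp: add.assoc mono_of_add[of _ "_ + _"] intro: ideal_mult_closed[OF assms])

lemma sat_exponents_cong:
  fixes I :: "('v, 'k::comm_ring_1) mpoly set"
  assumes I: "is_ideal I" and \<nu>: "\<nu> \<in> sat_exponents I S"
    and same: "\<forall>i. i \<notin> S \<longrightarrow> Poly_Mapping.lookup \<nu> i = Poly_Mapping.lookup \<nu>' i"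
  shows "\<nu>' \<in> sat_exponents I S"
proof -
  obtain \<delta> where \<delta>: "Poly_Mapping.keys \<delta> \<subseteq> S" "mono_of (\<nu> + \<delta>) \<in> I"
    using \<nu> by (auto simp: sat_exponents_def)
  define \<delta>' where "\<delta>' = \<nu> + \<delta> - \<nu>'"
  have "Poly_Mapping.lookup \<delta>' i = 0" if "i \<notin> S" for i
    using \<delta>(1) that same by (auto simp: \<delta>'_def in_keys_iff lookup_add lookup_minus)
  then have "Poly_Mapping.keys \<delta>' \<subseteq> S"
    by (meson in_keys_iff subsetI)
  moreover have "mono_of (\<nu>' + \<delta>') \<in> I"
    by (rule mono_of_mem_ideal_mono[OF I \<delta>(2)]) (simp add: \<delta>'_def lookup_add lookup_minus)
  ultimately show ?thesis
    by (auto simp: sat_exponents_def)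
qed

lemma monomial_ideal_subset_sat_exponents:
  fixes I :: "('v, 'k::comm_ring_1) mpoly set"
  assumes "monomial_ideal I"
  shows "I \<subseteq> mono_span (sat_exponents I S)"
proof -
  have "{\<nu>. mono_of \<nu> \<in> I} \<subseteq> sat_exponents I S"
    by (auto simp: sat_exponents_def intro!: exI[of _ 0])
  then show ?thesis
    by (subst monomial_ideal_eq_mono_span[OF assms]) (rule mono_span_mono)
qed

lemma keys_subset_sat_exponents:
  fixes f g :: "('v::finite, 'k::idom) mpoly"
  assumes I: "monomial_ideal I" and a: "a \<in> Poly_Mapping.keys f" and gf: "g * f ^ k \<in> I"
  shows "Poly_Mapping.keys g \<subseteq> sat_exponents I (Poly_Mapping.keys a)"
proof -
  let ?E = "sat_exponents I (Poly_Mapping.keys a)"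
  have ideal: "is_ideal I"
    using I by (rule monomial_ideal_imp_is_ideal)
  have "g * f ^ n \<in> mono_span ?E \<Longrightarrow> g \<in> mono_span ?E" for n
  proof (induction n)
    case (Suc n)
    from Suc.prems have "g * f ^ n * f \<in> mono_span ?E"
      by (simp add: mult.assoc mult.commute[of f])
    with sat_exponents_cong[OF ideal] have "g * f ^ n \<in> mono_span ?E"
      by (rule mono_span_mult_cancel[OF upward_closed_sat_exponents[OF ideal] _ a order_refl])
    then show ?case
      by (rule Suc.IH)
  qed simp
  then show ?thesis
    using gf monomial_ideal_subset_sat_exponents[OF I] by (auto simp: mono_span_def)
qed

lemma eventually_mono_of_mem_of_sat_exponents:
  fixes I :: "('v, 'k::comm_ring_1) mpoly set"
  assumes I: "is_ideal I" and \<mu>: "\<mu> \<in> sat_exponents I S"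
  shows "\<forall>\<^sub>F C in sequentially. \<forall>\<nu>. (\<forall>i\<in>S. C \<le> Poly_Mapping.lookup \<nu> i) \<longrightarrow> mono_of (\<mu> + \<nu>) \<in> I"
proof -
  obtain \<delta> where \<delta>: "Poly_Mapping.keys \<delta> \<subseteq> S" "mono_of (\<mu> + \<delta>) \<in> I"
    using \<mu> by (auto simp: sat_exponents_def)
  have "mono_of (\<mu> + \<nu>) \<in> I"
    if C: "(\<Sum>j\<in>Poly_Mapping.keys \<delta>. Poly_Mapping.lookup \<delta> j) \<le> C" and \<nu>: "\<forall>i\<in>S. C \<le> Poly_Mapping.lookup \<nu> i"
    for C \<nu>
  proof (rule mono_of_mem_ideal_mono[OF I \<delta>(2)])
    fix i
    have "Poly_Mapping.lookup \<delta> i \<le> Poly_Mapping.lookup \<nu> i"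
    proof (cases "i \<in> Poly_Mapping.keys \<delta>")
      case True
      then have "Poly_Mapping.lookup \<delta> i \<le> (\<Sum>j\<in>Poly_Mapping.keys \<delta>. Poly_Mapping.lookup \<delta> j)"
        by (intro member_le_sum) auto
      also have "\<dots> \<le> Poly_Mapping.lookup \<nu> i"
        using C \<nu> True \<delta>(1) by force
      finally show ?thesis .
    qed (simp add: in_keys_iff)
    then show "Poly_Mapping.lookup (\<mu> + \<delta>) i \<le> Poly_Mapping.lookup (\<mu> + \<nu>) i"
      by (simp add: lookup_add)
  qed
  then show ?thesis
    unfolding eventually_sequentially by blast
qed

lemma monomial_ideal_saturation_bound:
  fixes f g :: "('v::finite, 'k::idom) mpoly"
  assumes I: "monomial_ideal I" and gf: "g * f ^ k \<in> I"
  obtains C where "\<And>\<mu> a \<nu>. \<mu> \<in> Poly_Mapping.keys g \<Longrightarrow> a \<in> Poly_Mapping.keys f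
    \<Longrightarrow> \<forall>i\<in>Poly_Mapping.keys a. C \<le> Poly_Mapping.lookup \<nu> i \<Longrightarrow> mono_of (\<mu> + \<nu>) \<in> I"
proof -
  have ideal: "is_ideal I"
    using I by (rule monomial_ideal_imp_is_ideal)
  let ?P = "Poly_Mapping.keys g \<times> Poly_Mapping.keys f"
  have "\<forall>p\<in>?P. \<forall>\<^sub>F C in sequentially. \<forall>\<nu>.
      (\<forall>i\<in>Poly_Mapping.keys (snd p). C \<le> Poly_Mapping.lookup \<nu> i) \<longrightarrow> mono_of (fst p + \<nu>) \<in> I"
    using keys_subset_sat_exponents[OF I _ gf] eventually_mono_of_mem_of_sat_exponents[OF ideal]
    by (auto simp: mem_Times_iff)
  then have "\<forall>\<^sub>F C in sequentially. \<forall>p\<in>?P. \<forall>\<nu>.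
      (\<forall>i\<in>Poly_Mapping.keys (snd p). C \<le> Poly_Mapping.lookup \<nu> i) \<longrightarrow> mono_of (fst p + \<nu>) \<in> I"
    by (intro eventually_ball_finite) auto
  then obtain C where "\<forall>p\<in>?P. \<forall>\<nu>.
      (\<forall>i\<in>Poly_Mapping.keys (snd p). C \<le> Poly_Mapping.lookup \<nu> i) \<longrightarrow> mono_of (fst p + \<nu>) \<in> I"
    unfolding eventually_sequentially by blast
  then show ?thesis
    using that by force
qed


lemma self_mem_Jmon: "f \<in> Jmon (f :: ('v, 'k::comm_ring_1) mpoly)"
proof -
  have "(\<Sum>\<nu>\<in>Poly_Mapping.keys f. Poly_Mapping.single 0 (Poly_Mapping.lookup f \<nu>) * mono_of \<nu>) \<in> Jmon f"
    unfolding Jmon_def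
    by (intro ideal_sum_closed ideal_mult_closed is_ideal_gen_ideal gen_ideal_subset[THEN subsetD]) auto
  then show ?thesis
    by (simp flip: mpoly_eq_sum_monomials)
qed

lemma Jmon_subset_mono_span:
  "Jmon f \<subseteq> (mono_span {\<nu>. \<exists>a\<in>Poly_Mapping.keys f. \<exists>\<delta>. \<nu> = a + \<delta>} :: ('v, 'k::comm_ring_1) mpoly set)"
  unfolding Jmon_def
proof (rule gen_ideal_least)
  show "is_ideal (mono_span {\<nu>. \<exists>a\<in>Poly_Mapping.keys f. \<exists>\<delta>. \<nu> = a + \<delta>} :: ('v, 'k) mpoly set)"
    by (rule is_ideal_mono_span) (auto simp: upward_closed_def intro: add.left_commute)
  show "mono_of ` Poly_Mapping.keys f \<subseteq> (mono_span {\<nu>. \<exists>a\<in>Poly_Mapping.keys f. \<exists>\<delta>. \<nu> = a + \<delta>} :: ('v, 'k) mpoly set)"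
    by (auto simp: mono_span_def) (metis add_0_right)
qed

lemma radical_Jmon_subset:
  fixes f :: "('v::finite, 'k::idom) mpoly"
  shows "radical (Jmon f) \<subseteq> mono_span {\<mu>. \<exists>a\<in>Poly_Mapping.keys f. Poly_Mapping.keys a \<subseteq> Poly_Mapping.keys \<mu>}"
proof
  fix h assume "h \<in> radical (Jmon f)"
  then obtain n where n: "h ^ n \<in> Jmon f"
    by (auto simp: radical_def)
  show "h \<in> mono_span {\<mu>. \<exists>a\<in>Poly_Mapping.keys f. Poly_Mapping.keys a \<subseteq> Poly_Mapping.keys \<mu>}"
    unfolding mono_span_def
  proof safe
    fix \<mu> assume \<mu>: "\<mu> \<in> Poly_Mapping.keys h"
    define R where "R = {\<nu> :: 'v \<Rightarrow>\<^sub>0 nat. Poly_Mapping.keys \<nu> \<subseteq> Poly_Mapping.keys \<mu>}"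
    have R: "x + y \<in> R \<longleftrightarrow> x \<in> R \<and> y \<in> R" "0 \<in> R" for x y
      by (auto simp: R_def keys_add_nat)
    have "restrict_keys R h \<noteq> 0"
      using \<mu> by (auto simp: R_def keys_restrict_keys simp flip: keys_eq_empty)
    then have "restrict_keys R (h ^ n) \<noteq> 0"
      by (simp add: restrict_keys_power R mpoly_power_not_zero)
    then obtain \<nu> where "\<nu> \<in> Poly_Mapping.keys (h ^ n)" "\<nu> \<in> R"
      by (auto simp: keys_restrict_keys simp flip: keys_eq_empty)
    moreover obtain a \<delta> where "a \<in> Poly_Mapping.keys f" "\<nu> = a + \<delta>"
      using n Jmon_subset_mono_span \<open>\<nu> \<in> Poly_Mapping.keys (h ^ n)\<close> unfolding mono_span_def by blast
    ultimately show "\<exists>a\<in>Poly_Mapping.keys f. Poly_Mapping.keys a \<subseteq> Poly_Mapping.keys \<mu>"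
      by (auto simp: R_def keys_add_nat)
  qed
qed

lemma ideal_pow_subset_mono_span_multiplicities:
  fixes J :: "('v, 'k::comm_ring_1) mpoly set"
  assumes A: "finite A" and J: "J \<subseteq> mono_span {\<mu>. \<exists>a\<in>A. Poly_Mapping.keys a \<subseteq> Poly_Mapping.keys \<mu>}"
  shows "ideal_pow J n \<subseteq> mono_span {\<nu>. \<exists>c. sum c A = n
    \<and> (\<forall>a\<in>A. \<forall>i\<in>Poly_Mapping.keys a. c a \<le> Poly_Mapping.lookup \<nu> i)}"
    (is "_ \<subseteq> mono_span (?M n)")
proof (induction n)
  case 0
  have "\<nu> \<in> ?M 0" for \<nu>
    by (auto intro!: exI[of _ "\<lambda>_. 0"])
  then show ?case
    by (auto simp: mono_span_def)
next
  case (Suc n)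
  have "upward_closed (?M (Suc n))"
    unfolding upward_closed_def by (auto simp: lookup_add intro: trans_le_add2)
  moreover have "p * q \<in> mono_span (?M (Suc n))" if p: "p \<in> J" and q: "q \<in> ideal_pow J n" for p q
  proof -
    have "x + y \<in> ?M (Suc n)" if x: "x \<in> Poly_Mapping.keys p" and y: "y \<in> Poly_Mapping.keys q" for x y
    proof -
      obtain a0 where a0: "a0 \<in> A" "Poly_Mapping.keys a0 \<subseteq> Poly_Mapping.keys x"
        using J p x unfolding mono_span_def by blast
      obtain c where c: "sum c A = n"
        "\<And>a i. a \<in> A \<Longrightarrow> i \<in> Poly_Mapping.keys a \<Longrightarrow> c a \<le> Poly_Mapping.lookup y i"
        using Suc.IH q y unfolding mono_span_def by blast
      define c' where "c' a = c a + (if a = a0 then 1 else 0)" for a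
      have "sum c' A = Suc n"
        using A a0(1) c(1) by (simp add: c'_def sum.distrib)
      moreover have "c' a \<le> Poly_Mapping.lookup (x + y) i" if "a \<in> A" "i \<in> Poly_Mapping.keys a" for a i
        using c(2)[OF that] a0(2) that(2) by (auto simp: c'_def lookup_add in_keys_iff)
      ultimately show ?thesis
        by blast
    qed
    then show ?thesis
      using keys_mult[of p q] unfolding mono_span_def by blast
  qed
  ultimately show ?case
    unfolding ideal_pow.simps ideal_prod_def
    by (intro gen_ideal_least is_ideal_mono_span) auto
qed

lemma ideal_pow_subset_mono_span_pigeonhole:
  fixes J :: "('v, 'k::comm_ring_1) mpoly set"
  assumes "finite A" "A \<noteq> {}" "J \<subseteq> mono_span {\<mu>. \<exists>a\<in>A. Poly_Mapping.keys a \<subseteq> Poly_Mapping.keys \<mu>}"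
  shows "ideal_pow J (card A * C)
    \<subseteq> mono_span {\<nu>. \<exists>a\<in>A. \<forall>i\<in>Poly_Mapping.keys a. C \<le> Poly_Mapping.lookup \<nu> i}"
proof -
  have "\<exists>a\<in>A. C \<le> c a" if "sum c A = card A * C" for c :: "_ \<Rightarrow> nat"
  proof (rule ccontr)
    assume "\<not> (\<exists>a\<in>A. C \<le> c a)"
    then have "sum c A < (\<Sum>a\<in>A. C)"
      using assms(1,2) by (intro sum_strict_mono) auto
    with that show False
      by simp
  qed
  then have "{\<nu>. \<exists>c. sum c A = card A * C \<and> (\<forall>a\<in>A. \<forall>i\<in>Poly_Mapping.keys a. c a \<le> Poly_Mapping.lookup \<nu> i)}
      \<subseteq> {\<nu>. \<exists>a\<in>A. \<forall>i\<in>Poly_Mapping.keys a. C \<le> Poly_Mapping.lookup \<nu> i}"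
    by (blast intro: order_trans)
  then show ?thesis
    by (rule subset_trans[OF ideal_pow_subset_mono_span_multiplicities[OF assms(1,3)] mono_span_mono])
qed

lemma principal_ideal_subset_Jscript: "gen_ideal {f} \<subseteq> Jscript (f :: ('v, 'k::comm_ring_1) mpoly)"
proof
  fix p assume "p \<in> gen_ideal {f}"
  then obtain r where r: "p = r * f"
    by (auto simp: gen_ideal_singleton)
  have "p \<in> radical (Jmon (f ^ n))" if "n \<ge> 1" for n
  proof -
    have "r ^ n * f ^ n \<in> Jmon (f ^ n)"
      using self_mem_Jmon ideal_mult_closed[OF is_ideal_gen_ideal] unfolding Jmon_def by blast
    with that show ?thesis
      unfolding radical_def r by (auto simp: power_mult_distrib intro!: exI[of _ n])
  qed
  then show "p \<in> Jscript f"
    by (simp add: Jscript_def)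
qed

lemma Jscript_subset_radical_Jmon: "Jscript f \<subseteq> radical (Jmon f)"
  using INT_lower[of 1 "{1..}" "\<lambda>n. radical (Jmon (f ^ n))"] by (simp add: Jscript_def)

lemma mem_colon_ideal_pow_Jscript:
  fixes f g :: "('v::finite, 'k::idom) mpoly"
  assumes f: "f \<noteq> 0" and I: "monomial_ideal I" and gf: "g * f ^ k \<in> I"
  obtains m where "g \<in> colon I (ideal_pow (Jscript f) m)"
proof -
  obtain C where C: "\<And>\<mu> a \<nu>. \<mu> \<in> Poly_Mapping.keys g \<Longrightarrow> a \<in> Poly_Mapping.keys f
      \<Longrightarrow> \<forall>i\<in>Poly_Mapping.keys a. C \<le> Poly_Mapping.lookup \<nu> i \<Longrightarrow> mono_of (\<mu> + \<nu>) \<in> I"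
    using monomial_ideal_saturation_bound[OF I gf] by blast
  define m where "m = card (Poly_Mapping.keys f) * C"
  have pow: "ideal_pow (Jscript f) m
      \<subseteq> mono_span {\<nu>. \<exists>a\<in>Poly_Mapping.keys f. \<forall>i\<in>Poly_Mapping.keys a. C \<le> Poly_Mapping.lookup \<nu> i}"
    unfolding m_def using Jscript_subset_radical_Jmon radical_Jmon_subset f
    by (intro ideal_pow_subset_mono_span_pigeonhole) auto
  have "g * q \<in> I" if q: "q \<in> ideal_pow (Jscript f) m" for q
  proof (rule mult_mem_monomial_ideal[OF I])
    fix \<mu> \<nu> assume \<mu>: "\<mu> \<in> Poly_Mapping.keys g" and \<nu>: "\<nu> \<in> Poly_Mapping.keys q"
    then obtain a where "a \<in> Poly_Mapping.keys f" "\<forall>i\<in>Poly_Mapping.keys a. C \<le> Poly_Mapping.lookup \<nu> i"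
      using pow q unfolding mono_span_def by blast
    with \<mu> show "mono_of (\<mu> + \<nu>) \<in> I"
      using C by blast
  qed
  then show ?thesis
    using that by (auto simp: colon_def)
qed

theorem lemma6p3:
  fixes f :: "('v::finite, 'k::field) mpoly"
    and I :: "('v, 'k) mpoly set"
  assumes "f \<noteq> 0"
    and "monomial_ideal I"
  shows "saturation I (gen_ideal {f}) = saturation I (Jscript f)"
proof
  show "saturation I (Jscript f) \<subseteq> saturation I (gen_ideal {f})"
    by (intro saturation_antimono principal_ideal_subset_Jscript)
  show "saturation I (gen_ideal {f}) \<subseteq> saturation I (Jscript f)"
  proof
    fix g assume "g \<in> saturation I (gen_ideal {f})"
    then obtain k where "g * f ^ k \<in> I"
      using power_mem_ideal_pow[OF gen_ideal_subset[THEN subsetD]]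
      by (fastforce simp: saturation_def colon_def)
    then obtain m where "g \<in> colon I (ideal_pow (Jscript f) m)"
      using mem_colon_ideal_pow_Jscript[OF assms] by blast
    then show "g \<in> saturation I (Jscript f)"
      by (auto simp: saturation_def)
  qed
qed

end
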